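(* Consider an instance of the bicriteria asymmetric traveling salesman problem (bi-ATSP) with tour set $\mathcal{C}$, vector criterion $D=(D_1,D_2)$ and outcome set $\mathcal{D}=D(\mathcal{C})$. Let $i,j\in\{1,2\}$, $i\neq j$, and suppose criterion $D_i$ is more important than criterion $D_j$ with coefficient of relative importance $\theta\in(0,1)$; let $\hat P(\mathcal{D})$ be the corresponding reduced Pareto set. Suppose there exist tours $C', C'' \in P_D(\mathcal{C})$ with $D_j(C'')\neq D_j(C')$ such that $$\frac{D_i(C') - D_i(C'')}{D_j(C'') - D_j(C')} \geqslant \frac{1 - \theta}{\theta}.$$ Then $|P(\mathcal{D})| - |\hat{P}(\mathcal{D})| \geqslant 1$.
   Context: Bi-ATSP: given a complete directed graph $G=(V,E)$ on $n$ vertices, each arc $e\in E$ carries a weight vector $d(e)=(d_1(e),d_2(e))$ of positive numbers. $\mathcal{C}$ is the set of all $(n-1)!$ Hamiltonian circuits (tours) of $G$, and for a tour $C$, $D(C)=(D_1(C),D_2(C))$ with $D_j(C)=\sum_{e\in C} d_j(e)$. For vectors $y^*,y$, write $y^*\leq y$ if $y^*\neq y$ and $y^*_s\leqslant y_s$ for every coordinate $s$ (Pareto relation). For a vector criterion $F$ on $\mathcal{C}$, the set of pareto-optimal tours is $P_F(\mathcal{C})=\{C\in\mathcal{C}: \nexists C^*\in\mathcal{C},\ F(C^* )\leq F(C)\}$. The Pareto set is $P(\mathcal{D})=\{y\in\mathcal{D}: \nexists y^*\in\mathcal{D},\ y^*\leq y\}$. Reduced Pareto set: if criterion $D_i$ is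 declared more important than criterion $D_j$ ($\{i,j\}=\{1,2\}$) with coefficient of relative importance $\theta\in(0,1)$, define the new criterion $\hat D$ by $\hat D_j=\theta D_i+(1-\theta)D_j$ and $\hat D_i=D_i$, and set $\hat{P}(\mathcal{D})=D(P_{\hat D}(\mathcal{C}))$ (a subset of $P(\mathcal{D})$). *)

theory Defs
  imports Complex_Main
begin

text \<open>Hamiltonian circuits (tours) of the complete digraph on the finite vertex set V,
  each tour represented by its set of arcs.\<close>
definition tours :: "'a set \<Rightarrow> ('a \<times> 'a) set set" where
  "tours V = {C. \<exists>xs. distinct xs \<and> set xs = V \<and>
      C = {(xs ! k, xs ! ((k + 1) mod length xs)) | k. k < length xs}}"

definition Dvec :: "('a \<times> 'a \<Rightarrow> real \<times> real) \<Rightarrow> ('a \<times> 'a) set \<Rightarrow> real \<times> real" where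
  "Dvec d C = ((\<Sum>e\<in>C. fst (d e)), (\<Sum>e\<in>C. snd (d e)))"

definition coord :: "nat \<Rightarrow> real \<times> real \<Rightarrow> real" where
  "coord s y = (if s = 1 then fst y else snd y)"

definition pareto_le :: "real \<times> real \<Rightarrow> real \<times> real \<Rightarrow> bool" where
  "pareto_le y' y \<longleftrightarrow> y' \<noteq> y \<and> fst y' \<le> fst y \<and> snd y' \<le> snd y"

definition pareto_tours :: "('c \<Rightarrow> real \<times> real) \<Rightarrow> 'c set \<Rightarrow> 'c set" where
  "pareto_tours F Cs = {C \<in> Cs. \<not> (\<exists>C'\<in>Cs. pareto_le (F C') (F C))}"

definition pareto_set :: "(real \<times> real) set \<Rightarrow> (real \<times> real) set" where
  "pareto_set Y = {y \<in> Y. \<not> (\<exists>y'\<in>Y. pareto_le y' y)}"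

text \<open>Criterion i more important than j (the other one) with coefficient \<theta>:
  new criterion with hat D_i = D_i, hat D_j = \<theta> D_i + (1-\<theta>) D_j.\<close>
definition reduce :: "real \<Rightarrow> nat \<Rightarrow> real \<times> real \<Rightarrow> real \<times> real" where
  "reduce \<theta> i y = (if i = 1 then (fst y, \<theta> * fst y + (1 - \<theta>) * snd y)
                    else (\<theta> * snd y + (1 - \<theta>) * fst y, snd y))"

definition reduced_pareto_set ::
  "'a set \<Rightarrow> ('a \<times> 'a \<Rightarrow> real \<times> real) \<Rightarrow> real \<Rightarrow> nat \<Rightarrow> (real \<times> real) set" where
  "reduced_pareto_set V d \<theta> i =
     Dvec d ` pareto_tours (\<lambda>C. reduce \<theta> i (Dvec d C)) (tours V)"

end

theory Submission
  imports Defs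
begin

text \<open>If the Pareto tours C' and C'' trade off the two criteria at a rate of at least
  (1 - \<theta>)/\<theta>, then the one that is better in criterion j becomes dominated once
  D_j is replaced by \<theta> D_i + (1 - \<theta>) D_j. Its outcome is Pareto optimal but lies
  outside the reduced Pareto set, which is itself contained in the Pareto set because
  the reduction is strictly monotone for the Pareto relation.\<close>

lemma pareto_le_reduce:
  assumes "0 \<le> \<theta>" "\<theta> < 1" "pareto_le y' y"
  shows "pareto_le (reduce \<theta> i y') (reduce \<theta> i y)"
proof -
  obtain a x where y': "y' = (a, x)" by force
  obtain b z where y: "y = (b, z)" by force
  have le: "a \<le> b" "x \<le> z" and ne: "a \<noteq> b \<or> x \<noteq> z"
    using assms(3) unfolding y y' pareto_le_def by auto
  have "\<theta> * a + (1 - \<theta>) * x \<le> \<theta> * b + (1 - \<theta>) * z"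
       "\<theta> * x + (1 - \<theta>) * a \<le> \<theta> * z + (1 - \<theta>) * b"
    using le assms(1,2) by (simp_all add: add_mono mult_left_mono)
  moreover have "a \<noteq> b \<or> \<theta> * a + (1 - \<theta>) * x \<noteq> \<theta> * b + (1 - \<theta>) * z"
    and "x \<noteq> z \<or> \<theta> * x + (1 - \<theta>) * a \<noteq> \<theta> * z + (1 - \<theta>) * b"
    using ne assms(2) by auto
  ultimately show ?thesis
    using le unfolding y y' reduce_def pareto_le_def by auto
qed

lemma pareto_tours_image_in_pareto_set:
  "C \<in> pareto_tours F Cs \<Longrightarrow> F C \<in> pareto_set (F ` Cs)"
  unfolding pareto_tours_def pareto_set_def by blast

lemma image_pareto_tours_comp_subset_pareto_set:
  assumes "\<And>y' y. pareto_le y' y \<Longrightarrow> pareto_le (g y') (g y)"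
  shows "F ` pareto_tours (\<lambda>C. g (F C)) Cs \<subseteq> pareto_set (F ` Cs)"
  using assms unfolding pareto_tours_def pareto_set_def by blast

lemma image_pareto_tours_comp_notin:
  assumes "C1 \<in> Cs" "pareto_le (g (F C1)) (g (F C0))"
  shows "F C0 \<notin> F ` pareto_tours (\<lambda>C. g (F C)) Cs"
  using assms unfolding pareto_tours_def by (auto simp: image_iff)

lemma pareto_le_coord:
  assumes "i \<in> {1, 2}" "j \<in> {1, 2}" "i \<noteq> j"
  shows "pareto_le y' y \<longleftrightarrow> y' \<noteq> y \<and> coord i y' \<le> coord i y \<and> coord j y' \<le> coord j y"
  using assms unfolding pareto_le_def coord_def by auto

lemma coord_reduce_same: "i \<in> {1, 2} \<Longrightarrow> coord i (reduce \<theta> i y) = coord i y"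
  unfolding coord_def reduce_def by auto

lemma coord_reduce_other:
  assumes "i \<in> {1, 2}" "j \<in> {1, 2}" "i \<noteq> j"
  shows "coord j (reduce \<theta> i y) = \<theta> * coord i y + (1 - \<theta>) * coord j y"
  using assms unfolding coord_def reduce_def by auto

lemma reduce_dominated_of_tradeoff:
  assumes ij: "i \<in> {1, 2}" "j \<in> {1, 2}" "i \<noteq> j" and "0 < \<theta>" "\<theta> < 1"
    and less: "coord j y1 < coord j y2"
    and rate: "(coord i y1 - coord i y2) / (coord j y2 - coord j y1) \<ge> (1 - \<theta>) / \<theta>"
  shows "pareto_le (reduce \<theta> i y2) (reduce \<theta> i y1)"
proof -
  define \<Delta>i where "\<Delta>i = coord i y1 - coord i y2"
  define \<Delta>j where "\<Delta>j = coord j y2 - coord j y1"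
  have "\<Delta>j > 0" using less unfolding \<Delta>j_def by simp
  have "(1 - \<theta>) * \<Delta>j / \<theta> \<le> \<Delta>i"
    using rate pos_le_divide_eq[OF \<open>\<Delta>j > 0\<close>] unfolding \<Delta>i_def \<Delta>j_def by simp
  then have trade: "(1 - \<theta>) * \<Delta>j \<le> \<theta> * \<Delta>i"
    using pos_divide_le_eq[OF \<open>0 < \<theta>\<close>] by (simp add: mult.commute)
  moreover have "(1 - \<theta>) * \<Delta>j > 0" using \<open>\<Delta>j > 0\<close> \<open>\<theta> < 1\<close> by simp
  ultimately have "\<theta> * \<Delta>i > 0" by linarith
  then have "\<Delta>i > 0" using \<open>0 < \<theta>\<close> by (simp add: zero_less_mult_iff)
  then have "coord i (reduce \<theta> i y2) < coord i (reduce \<theta> i y1)"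
    unfolding coord_reduce_same[OF ij(1)] \<Delta>i_def by simp
  moreover have "coord j (reduce \<theta> i y2) \<le> coord j (reduce \<theta> i y1)"
    using trade unfolding coord_reduce_other[OF ij] \<Delta>i_def \<Delta>j_def right_diff_distrib
    by linarith
  ultimately show ?thesis unfolding pareto_le_coord[OF ij] by auto
qed

lemma reduce_comparable_of_tradeoff:
  assumes ij: "i \<in> {1, 2}" "j \<in> {1, 2}" "i \<noteq> j" and \<theta>: "0 < \<theta>" "\<theta> < 1"
    and "coord j y2 \<noteq> coord j y1"
    and rate: "(coord i y1 - coord i y2) / (coord j y2 - coord j y1) \<ge> (1 - \<theta>) / \<theta>"
  shows "pareto_le (reduce \<theta> i y2) (reduce \<theta> i y1) \<or> pareto_le (reduce \<theta> i y1) (reduce \<theta> i y2)"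
proof (cases "coord j y1 < coord j y2")
  case True
  then show ?thesis using reduce_dominated_of_tradeoff[OF ij \<theta> _ rate] by blast
next
  case False
  then have "coord j y2 < coord j y1" using assms(6) by simp
  moreover have "(coord i y2 - coord i y1) / (coord j y1 - coord j y2) \<ge> (1 - \<theta>) / \<theta>"
    using rate by (metis minus_diff_eq minus_divide_divide)
  ultimately show ?thesis using reduce_dominated_of_tradeoff[OF ij \<theta>] by blast
qed

lemma finite_tours: "finite V \<Longrightarrow> finite (tours V)"
proof -
  assume "finite V"
  have "tours V \<subseteq> (\<lambda>xs. {(xs ! k, xs ! ((k + 1) mod length xs)) | k. k < length xs})
                    ` {xs. set xs \<subseteq> V \<and> length xs \<le> card V}"
    unfolding tours_def using distinct_card by fastforce
  moreover have "finite {xs. set xs \<subseteq> V \<and> length xs \<le> card V}"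
    using finite_lists_length_le[OF \<open>finite V\<close>] by simp
  ultimately show ?thesis by (meson finite_surj)
qed

theorem proposition1:
  fixes V :: "'a set" and d :: "'a \<times> 'a \<Rightarrow> real \<times> real"
    and \<theta> :: real and i j :: nat and C' C'' :: "('a \<times> 'a) set"
  assumes "finite V"
    and "\<And>u v. u \<in> V \<Longrightarrow> v \<in> V \<Longrightarrow> u \<noteq> v \<Longrightarrow> fst (d (u, v)) > 0 \<and> snd (d (u, v)) > 0"
    and "i \<in> {1, 2}" and "j \<in> {1, 2}" and "i \<noteq> j"
    and "0 < \<theta>" and "\<theta> < 1"
    and "C' \<in> pareto_tours (Dvec d) (tours V)"
    and "C'' \<in> pareto_tours (Dvec d) (tours V)"
    and "coord j (Dvec d C'') \<noteq> coord j (Dvec d C')"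
    and "(coord i (Dvec d C') - coord i (Dvec d C'')) /
           (coord j (Dvec d C'') - coord j (Dvec d C')) \<ge> (1 - \<theta>) / \<theta>"
  shows "int (card (pareto_set (Dvec d ` tours V)))
           - int (card (reduced_pareto_set V d \<theta> i)) \<ge> 1"
proof -
  let ?P = "pareto_set (Dvec d ` tours V)"
  let ?R = "reduced_pareto_set V d \<theta> i"
  obtain C0 C1 where C0: "C0 \<in> pareto_tours (Dvec d) (tours V)" and C1: "C1 \<in> tours V"
    and dominated: "pareto_le (reduce \<theta> i (Dvec d C1)) (reduce \<theta> i (Dvec d C0))"
    using reduce_comparable_of_tradeoff[OF assms(3-7,10,11)] assms(8,9)
    unfolding pareto_tours_def by blast
  have "?R \<subseteq> ?P"
    unfolding reduced_pareto_set_def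
    by (rule image_pareto_tours_comp_subset_pareto_set) (use assms(6,7) pareto_le_reduce in auto)
  moreover have "Dvec d C0 \<in> ?P" using C0 by (rule pareto_tours_image_in_pareto_set)
  moreover have "Dvec d C0 \<notin> ?R"
    unfolding reduced_pareto_set_def using image_pareto_tours_comp_notin[where g = "reduce \<theta> i", OF C1 dominated] .
  moreover have "finite ?P"
    using finite_tours[OF assms(1)] unfolding pareto_set_def by simp
  ultimately have "card ?R < card ?P" by (metis psubset_card_mono psubsetI)
  then show ?thesis by linarith
qed

end
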